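(* Let $\mathbf{C}$ be a category, take $\mathcal{M}=\mathrm{mono}(\mathbf{C})$ the class of all monomorphisms as stable system of monics, suppose $\mathbf{C}$ has pullbacks along monomorphisms and has a $\mathrm{mono}(\mathbf{C})$-partial map classifier. Then for every composable sequence of monomorphisms $A\xrightarrow{f}B\xrightarrow{m}C$, any final pullback complement $A\xrightarrow{n}F\xrightarrow{g}C$ of $(f,m)$ satisfies that both $n$ and $g$ are monomorphisms.
   Context: Final pullback complement (FPC) of composable $A\xrightarrow{f}B\xrightarrow{m}C$: a pair $A\xrightarrow{n}F\xrightarrow{g}C$ with $g\circ n=m\circ f$ forming a pullback square, such that for every pullback square $m\circ u=w\circ v$ ($u:X\to B$, $v:X\to Y$, $w:Y\to C$) and every $t:X\to A$ with $f\circ t=u$ there is a unique $y:Y\to F$ with $g\circ y=w$ and $y\circ v=n\circ t$. "Has pullbacks along monomorphisms": pullbacks of cospans $A\to B\leftarrow B'$ with $B'\to B$ monic exist. For a stable system of monics $\mathcal{M}$ (a class of monos containing isomorphisms, closed under composition and pullback), an $\mathcal{M}$-partial map classifier is a functor $T:\mathbf{C}\to\mathbf{C}$ with a natural transformation $\eta:\mathrm{Id}_{\mathbf{C}}\Rightarrow T$ such that each $\eta_X\in\mathcal{M}$ and for every span $A\xleftarrow{m}X\xrightarrow{f}B$ with $m\in\mathcal{M}$ there is a unique $\varphi:A\to T(B)$ such that $(m,f)$ is a pullback of $(\varphi,\eta_B)$. *)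

theory Defs
  imports Main
begin

text \<open>A (locally small, set-based) category: objects of type 'o, arrows of type 'a.
  cmp C g f denotes the composite g \<circ> f (f first).\<close>

record ('o, 'a) category_data =
  Ob  :: "'o set"
  Ar  :: "'a set"
  dom :: "'a \<Rightarrow> 'o"
  cod :: "'a \<Rightarrow> 'o"
  idt :: "'o \<Rightarrow> 'a"
  cmp :: "'a \<Rightarrow> 'a \<Rightarrow> 'a"

definition hom :: "('o, 'a) category_data \<Rightarrow> 'o \<Rightarrow> 'o \<Rightarrow> 'a set" where
  "hom C X Y = {f \<in> Ar C. dom C f = X \<and> cod C f = Y}"

definition is_category :: "('o, 'a) category_data \<Rightarrow> bool" where
  "is_category C \<longleftrightarrow>
     (\<forall>f\<in>Ar C. dom C f \<in> Ob C \<and> cod C f \<in> Ob C) \<and>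
     (\<forall>X\<in>Ob C. idt C X \<in> hom C X X) \<and>
     (\<forall>f\<in>Ar C. \<forall>g\<in>Ar C. cod C f = dom C g \<longrightarrow>
         cmp C g f \<in> hom C (dom C f) (cod C g)) \<and>
     (\<forall>f\<in>Ar C. cmp C f (idt C (dom C f)) = f \<and> cmp C (idt C (cod C f)) f = f) \<and>
     (\<forall>f\<in>Ar C. \<forall>g\<in>Ar C. \<forall>h\<in>Ar C. cod C f = dom C g \<longrightarrow> cod C g = dom C h \<longrightarrow>
         cmp C h (cmp C g f) = cmp C (cmp C h g) f)"

definition is_mono :: "('o, 'a) category_data \<Rightarrow> 'a \<Rightarrow> bool" where
  "is_mono C m \<longleftrightarrow> m \<in> Ar C \<and>
     (\<forall>f\<in>Ar C. \<forall>g\<in>Ar C. dom C f = dom C g \<longrightarrow> cod C f = dom C m \<longrightarrow> cod C g = dom C m \<longrightarrow>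
         cmp C m f = cmp C m g \<longrightarrow> f = g)"

text \<open>is_pullback C f g p q: the square  f \<circ> p = g \<circ> q  (f : A \<rightarrow> Z, g : B \<rightarrow> Z,
  p : P \<rightarrow> A, q : P \<rightarrow> B) is a pullback of the cospan (f, g).\<close>
definition is_pullback :: "('o, 'a) category_data \<Rightarrow> 'a \<Rightarrow> 'a \<Rightarrow> 'a \<Rightarrow> 'a \<Rightarrow> bool" where
  "is_pullback C f g p q \<longleftrightarrow>
     f \<in> Ar C \<and> g \<in> Ar C \<and> p \<in> Ar C \<and> q \<in> Ar C \<and>
     cod C f = cod C g \<and> cod C p = dom C f \<and> cod C q = dom C g \<and> dom C p = dom C q \<and>
     cmp C f p = cmp C g q \<and>
     (\<forall>Z\<in>Ob C. \<forall>h\<in>hom C Z (dom C f). \<forall>k\<in>hom C Z (dom C g).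
        cmp C f h = cmp C g k \<longrightarrow>
        (\<exists>!u. u \<in> hom C Z (dom C p) \<and> cmp C p u = h \<and> cmp C q u = k))"

definition has_pullbacks_along_monos :: "('o, 'a) category_data \<Rightarrow> bool" where
  "has_pullbacks_along_monos C \<longleftrightarrow>
     (\<forall>f\<in>Ar C. \<forall>m\<in>Ar C. is_mono C m \<longrightarrow> cod C f = cod C m \<longrightarrow>
        (\<exists>p q. is_pullback C f m p q))"

definition is_fpc :: "('o, 'a) category_data \<Rightarrow> 'a \<Rightarrow> 'a \<Rightarrow> 'a \<Rightarrow> 'a \<Rightarrow> bool" where
  "is_fpc C f m n g \<longleftrightarrow>
     n \<in> Ar C \<and> g \<in> Ar C \<and> dom C n = dom C f \<and> cod C n = dom C g \<and> cod C g = cod C m \<and>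
     is_pullback C m g f n \<and>
     (\<forall>u\<in>Ar C. \<forall>v\<in>Ar C. \<forall>w\<in>Ar C. \<forall>t\<in>Ar C.
        is_pullback C m w u v \<longrightarrow> dom C t = dom C u \<longrightarrow> cod C t = dom C f \<longrightarrow> cmp C f t = u \<longrightarrow>
        (\<exists>!y. y \<in> hom C (dom C w) (cod C n) \<and> cmp C g y = w \<and> cmp C y v = cmp C n t))"

definition is_endofunctor ::
  "('o, 'a) category_data \<Rightarrow> ('o \<Rightarrow> 'o) \<Rightarrow> ('a \<Rightarrow> 'a) \<Rightarrow> bool" where
  "is_endofunctor C TO TA \<longleftrightarrow>
     (\<forall>X\<in>Ob C. TO X \<in> Ob C \<and> TA (idt C X) = idt C (TO X)) \<and>
     (\<forall>f\<in>Ar C. TA f \<in> hom C (TO (dom C f)) (TO (cod C f))) \<and>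
     (\<forall>f\<in>Ar C. \<forall>g\<in>Ar C. cod C f = dom C g \<longrightarrow> TA (cmp C g f) = cmp C (TA g) (TA f))"

definition is_mono_pmc ::
  "('o, 'a) category_data \<Rightarrow> ('o \<Rightarrow> 'o) \<Rightarrow> ('a \<Rightarrow> 'a) \<Rightarrow> ('o \<Rightarrow> 'a) \<Rightarrow> bool" where
  "is_mono_pmc C TO TA \<eta> \<longleftrightarrow>
     is_endofunctor C TO TA \<and>
     (\<forall>X\<in>Ob C. \<eta> X \<in> hom C X (TO X) \<and> is_mono C (\<eta> X)) \<and>
     (\<forall>f\<in>Ar C. cmp C (TA f) (\<eta> (dom C f)) = cmp C (\<eta> (cod C f)) f) \<and>
     (\<forall>m\<in>Ar C. \<forall>f\<in>Ar C. is_mono C m \<longrightarrow> dom C m = dom C f \<longrightarrow>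
        (\<exists>!\<phi>. \<phi> \<in> hom C (cod C m) (TO (cod C f)) \<and> is_pullback C \<phi> (\<eta> (cod C f)) m f))"

definition has_mono_pmc :: "('o, 'a) category_data \<Rightarrow> bool" where
  "has_mono_pmc C \<longleftrightarrow> (\<exists>TO TA \<eta>. is_mono_pmc C TO TA \<eta>)"

end

theory Submission
  imports Defs
begin

text \<open>
  Since \<open>g \<circ> n = m \<circ> f\<close> is monic, so is \<open>n\<close>.
  For \<open>g\<close>, let \<open>g \<circ> x = g \<circ> y =: w\<close> and pull \<open>w\<close> back along the monic \<open>m\<close>, giving a
  pullback square \<open>m \<circ> q = w \<circ> p\<close>. Both \<open>x \<circ> p\<close> and \<open>y \<circ> p\<close> complete \<open>q\<close> to a cone over
  \<open>(m, g)\<close>; their factorisations through the pullback \<open>(f, n)\<close> agree after composing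
  with the monic \<open>f\<close>, hence coincide, so \<open>x \<circ> p = y \<circ> p = n \<circ> t\<close>. Now \<open>x\<close> and \<open>y\<close> both
  satisfy the defining equations of the arrow that finality of the complement assigns to
  the square \<open>m \<circ> q = w \<circ> p\<close> and \<open>t\<close>, so \<open>x = y\<close>.
\<close>

lemma cmp_closed:
  assumes "is_category C" "f \<in> Ar C" "g \<in> Ar C" "cod C f = dom C g"
  shows "cmp C g f \<in> Ar C" "dom C (cmp C g f) = dom C f" "cod C (cmp C g f) = cod C g"
  using assms unfolding is_category_def hom_def by blast+

lemma cmp_assoc:
  assumes "is_category C" "f \<in> Ar C" "g \<in> Ar C" "h \<in> Ar C"
    and "cod C f = dom C g" "cod C g = dom C h"
  shows "cmp C h (cmp C g f) = cmp C (cmp C h g) f"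
  using assms unfolding is_category_def by blast

lemma dom_in_Ob:
  assumes "is_category C" "f \<in> Ar C"
  shows "dom C f \<in> Ob C"
  using assms unfolding is_category_def by blast

lemma is_monoI:
  assumes "m \<in> Ar C"
    and "\<And>x y. \<lbrakk>x \<in> Ar C; y \<in> Ar C; dom C x = dom C y; cod C x = dom C m; cod C y = dom C m;
                cmp C m x = cmp C m y\<rbrakk> \<Longrightarrow> x = y"
  shows "is_mono C m"
  using assms unfolding is_mono_def by blast

lemma is_monoD:
  assumes "is_mono C m" "x \<in> Ar C" "y \<in> Ar C" "dom C x = dom C y"
    and "cod C x = dom C m" "cod C y = dom C m" "cmp C m x = cmp C m y"
  shows "x = y"
  using assms unfolding is_mono_def by blast

lemma mono_cmp:
  assumes C: "is_category C" and f: "is_mono C f" and m: "is_mono C m"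
    and fm: "cod C f = dom C m"
  shows "is_mono C (cmp C m f)"
proof -
  have f_Ar: "f \<in> Ar C" and m_Ar: "m \<in> Ar C"
    using f m unfolding is_mono_def by blast+
  show ?thesis
  proof (rule is_monoI)
    show "cmp C m f \<in> Ar C" using cmp_closed[OF C f_Ar m_Ar fm] by blast
  next
    fix x y
    assume x: "x \<in> Ar C" and y: "y \<in> Ar C" and xy: "dom C x = dom C y"
      and cx: "cod C x = dom C (cmp C m f)" and cy: "cod C y = dom C (cmp C m f)"
      and eq: "cmp C (cmp C m f) x = cmp C (cmp C m f) y"
    have cx': "cod C x = dom C f" and cy': "cod C y = dom C f"
      using cx cy cmp_closed[OF C f_Ar m_Ar fm] by simp_all
    have "cmp C m (cmp C f x) = cmp C m (cmp C f y)"
      using eq cmp_assoc[OF C x f_Ar m_Ar cx' fm] cmp_assoc[OF C y f_Ar m_Ar cy' fm] by simp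
    then have "cmp C f x = cmp C f y"
      using is_monoD[OF m] cmp_closed[OF C x f_Ar cx'] cmp_closed[OF C y f_Ar cy'] xy fm
      by simp
    then show "x = y" using is_monoD[OF f x y xy cx' cy'] by blast
  qed
qed

lemma mono_of_mono_cmp:
  assumes C: "is_category C" and n: "n \<in> Ar C" and g: "g \<in> Ar C"
    and ng: "cod C n = dom C g" and gn: "is_mono C (cmp C g n)"
  shows "is_mono C n"
proof (rule is_monoI[OF n])
  fix x y
  assume x: "x \<in> Ar C" and y: "y \<in> Ar C" and xy: "dom C x = dom C y"
    and cx: "cod C x = dom C n" and cy: "cod C y = dom C n" and eq: "cmp C n x = cmp C n y"
  have "cmp C (cmp C g n) x = cmp C (cmp C g n) y"
    using eq cmp_assoc[OF C x n g cx ng] cmp_assoc[OF C y n g cy ng] by simp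
  then show "x = y"
    using is_monoD[OF gn x y xy] cx cy cmp_closed[OF C n g ng] by simp
qed

lemma pullback_commute:
  assumes "is_pullback C f g p q"
  shows "is_pullback C g f q p"
  unfolding is_pullback_def
proof (intro conjI ballI impI)
  fix Z k h
  assume "Z \<in> Ob C" "k \<in> hom C Z (dom C g)" "h \<in> hom C Z (dom C f)" "cmp C g k = cmp C f h"
  then have "\<exists>!u. u \<in> hom C Z (dom C p) \<and> cmp C p u = h \<and> cmp C q u = k"
    using assms unfolding is_pullback_def by (metis (no_types, lifting))
  then show "\<exists>!u. u \<in> hom C Z (dom C q) \<and> cmp C q u = k \<and> cmp C p u = h"
    using assms unfolding is_pullback_def by (simp add: conj_commute)
qed (use assms in \<open>simp_all add: is_pullback_def\<close>)

lemma pullback_factor: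
  assumes C: "is_category C" and pb: "is_pullback C f g p q"
    and "h \<in> Ar C" "k \<in> Ar C" "dom C h = dom C k" "cod C h = dom C f" "cod C k = dom C g"
    and "cmp C f h = cmp C g k"
  obtains u where "u \<in> hom C (dom C h) (dom C p)" "cmp C p u = h" "cmp C q u = k"
proof -
  have "dom C h \<in> Ob C" using dom_in_Ob[OF C \<open>h \<in> Ar C\<close>] .
  moreover have "h \<in> hom C (dom C h) (dom C f)" "k \<in> hom C (dom C h) (dom C g)"
    using assms(3-7) unfolding hom_def by auto
  ultimately have "\<exists>!u. u \<in> hom C (dom C h) (dom C p) \<and> cmp C p u = h \<and> cmp C q u = k"
    using pb \<open>cmp C f h = cmp C g k\<close> unfolding is_pullback_def by blast
  then show thesis using that by blast
qed

lemma pullback_cone_eq_of_mono: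
  assumes C: "is_category C" and pb: "is_pullback C f g p q" and p: "is_mono C p"
    and h: "h \<in> Ar C" "cod C h = dom C f"
    and a: "a \<in> Ar C" "dom C a = dom C h" "cod C a = dom C g" "cmp C f h = cmp C g a"
    and b: "b \<in> Ar C" "dom C b = dom C h" "cod C b = dom C g" "cmp C f h = cmp C g b"
  shows "a = b"
proof -
  obtain u where u: "u \<in> hom C (dom C h) (dom C p)" "cmp C p u = h" "cmp C q u = a"
    using pullback_factor[OF C pb h(1) a(1) a(2)[symmetric] h(2) a(3,4)] by blast
  obtain v where v: "v \<in> hom C (dom C h) (dom C p)" "cmp C p v = h" "cmp C q v = b"
    using pullback_factor[OF C pb h(1) b(1) b(2)[symmetric] h(2) b(3,4)] by blast
  have "u = v"
    using is_monoD[OF p] u(1,2) v(1,2) unfolding hom_def by auto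
  then show ?thesis using u(3) v(3) by simp
qed

lemma pullback_along_mono_obtain:
  assumes "has_pullbacks_along_monos C" "w \<in> Ar C" "is_mono C m" "cod C w = cod C m"
  obtains p q where "is_pullback C m w q p"
proof -
  have "m \<in> Ar C" using assms(3) unfolding is_mono_def by blast
  then obtain p q where "is_pullback C w m p q"
    using assms unfolding has_pullbacks_along_monos_def by blast
  then show thesis by (rule that[OF pullback_commute])
qed

lemma fpc_mediator_unique:
  assumes fpc: "is_fpc C f m n g" and pb: "is_pullback C m w u v"
    and t: "t \<in> Ar C" "dom C t = dom C u" "cod C t = dom C f" "cmp C f t = u"
    and z: "z \<in> hom C (dom C w) (cod C n)" "cmp C g z = w" "cmp C z v = cmp C n t"
    and z': "z' \<in> hom C (dom C w) (cod C n)" "cmp C g z' = w" "cmp C z' v = cmp C n t"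
  shows "z = z'"
proof -
  have "u \<in> Ar C" "v \<in> Ar C" "w \<in> Ar C" using pb unfolding is_pullback_def by blast+
  then have "\<exists>!y. y \<in> hom C (dom C w) (cod C n) \<and> cmp C g y = w \<and> cmp C y v = cmp C n t"
    using fpc pb t unfolding is_fpc_def by blast
  then show ?thesis using z z' by blast
qed

lemma fpc_mono_snd:
  assumes C: "is_category C" and pbs: "has_pullbacks_along_monos C"
    and f: "is_mono C f" and m: "is_mono C m" and fpc: "is_fpc C f m n g"
  shows "is_mono C g"
proof -
  have g: "g \<in> Ar C" and gm: "cod C g = cod C m"
    and ng: "cod C n = dom C g" and pb_fn: "is_pullback C m g f n"
    using fpc unfolding is_fpc_def by blast+
  show ?thesis
  proof (rule is_monoI[OF g])
    fix x y
    assume x: "x \<in> Ar C" and y: "y \<in> Ar C" and xy: "dom C x = dom C y"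
      and cx: "cod C x = dom C g" and cy: "cod C y = dom C g" and eq: "cmp C g x = cmp C g y"
    define w where "w = cmp C g x"
    have w: "w \<in> Ar C" "dom C w = dom C x" "cod C w = cod C m"
      using cmp_closed[OF C x g cx] gm unfolding w_def by auto
    obtain p q where pb: "is_pullback C m w q p"
      using pullback_along_mono_obtain[OF pbs w(1) m w(3)] .
    have p: "p \<in> Ar C" "cod C p = dom C x" and q: "q \<in> Ar C" "cod C q = dom C m"
      and pq: "dom C p = dom C q" "cmp C m q = cmp C w p"
      using pb w(2) unfolding is_pullback_def by auto
    have cone_x: "cmp C m q = cmp C g (cmp C x p)"
      using pq(2) cmp_assoc[OF C p(1) x g p(2) cx] unfolding w_def by simp
    have cone_y: "cmp C m q = cmp C g (cmp C y p)"
      using pq(2) eq cmp_assoc[OF C p(1) y g _ cy] p(2) xy unfolding w_def by simp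
    have xp: "cmp C x p \<in> Ar C" "dom C (cmp C x p) = dom C q" "cod C (cmp C x p) = dom C g"
      using cmp_closed[OF C p(1) x p(2)] pq(1) cx by auto
    have yp: "cmp C y p \<in> Ar C" "dom C (cmp C y p) = dom C q" "cod C (cmp C y p) = dom C g"
      using cmp_closed[OF C p(1) y] p(2) xy pq(1) cy by auto
    have xp_yp: "cmp C x p = cmp C y p"
      using pullback_cone_eq_of_mono[OF C pb_fn f q xp cone_x yp cone_y] .
    obtain t where t: "t \<in> hom C (dom C q) (dom C f)" "cmp C f t = q" "cmp C n t = cmp C x p"
      using pullback_factor[OF C pb_fn q(1) xp(1) xp(2)[symmetric] q(2) xp(3) cone_x] by blast
    have t_Ar: "t \<in> Ar C" "dom C t = dom C q" "cod C t = dom C f"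
      using t(1) unfolding hom_def by auto
    have "x \<in> hom C (dom C w) (cod C n)" "y \<in> hom C (dom C w) (cod C n)"
      using x y w(2) xy cx cy ng unfolding hom_def by auto
    then show "x = y"
      using fpc_mediator_unique[OF fpc pb t_Ar t(2)] t(3) xp_yp eq unfolding w_def by simp
  qed
qed

theorem mainTheorem11:
  fixes \<C> :: "('o, 'a) category_data"
  assumes "is_category \<C>"
    and "has_pullbacks_along_monos \<C>"
    and "has_mono_pmc \<C>"
    and "f \<in> hom \<C> A B" and "m \<in> hom \<C> B C"
    and "is_mono \<C> f" and "is_mono \<C> m"
    and "is_fpc \<C> f m n g"
  shows "is_mono \<C> n \<and> is_mono \<C> g"
proof
  have fm: "cod \<C> f = dom \<C> m" using assms(4,5) unfolding hom_def by simp
  have n: "n \<in> Ar \<C>" and g: "g \<in> Ar \<C>" and ng: "cod \<C> n = dom \<C> g"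
    and pb: "is_pullback \<C> m g f n"
    using assms(8) unfolding is_fpc_def by blast+
  have "cmp \<C> g n = cmp \<C> m f" using pb unfolding is_pullback_def by simp
  then have "is_mono \<C> (cmp \<C> g n)" using mono_cmp[OF assms(1,6,7) fm] by simp
  then show "is_mono \<C> n" using mono_of_mono_cmp[OF assms(1) n g ng] by blast
  show "is_mono \<C> g" using fpc_mono_snd[OF assms(1,2,6,7,8)] .
qed

end
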